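(* Let $K$ be a perfect field of characteristic $p>0$ and let $\theta:K[x]\to K[x^p]$, $\theta(f)=f^p+\frac{d^{p-1}f}{dx^{p-1}}$ (a bijection). Write $g\in K[x^p]$ as $g=\sum_{i=0}^{p-1}\mu_ix^{pi}$ with $\mu_i\in K[x^{p^2}]$, and write $\theta^{-1}(g)=\sum_{i=0}^{p-1}\lambda_ix^i$ with $\lambda_i\in K[x^p]$. Then (1) for $i=0,1,\dots,p-2$: $\displaystyle \lambda_i=\mu_i^{1/p}+F^{-1}\pi_iF^{-1}\sum_{j\ge0}\Delta^j(\mu_{p-1})$; (2) $\displaystyle \lambda_{p-1}=\sum_{i=0}^{p-2}x^{pi}\,\pi_iF^{-1}\sum_{j\ge0}\Delta^j(\mu_{p-1})+x^{p(p-1)}\sum_{j\ge1}\Delta^j(\mu_{p-1})$.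
   Context: $F^{-1}$ denotes the inverse of the Frobenius, applied to polynomials in $x^p$: $F^{-1}\big(\sum_j c_jx^{pj}\big)=\sum_j c_j^{1/p}x^{j}$ ($c_j\in K$); in particular $\mu_i^{1/p}:=F^{-1}(\mu_i)\in K[x^p]$, and $F^{-1}$ maps $K[x^{p^2}]\to K[x^p]$ and $K[x^p]\to K[x]$. For $i=0,\dots,p-1$, $\pi_i:K[x^p]\to K[x^{p^2}]$ is the map $\sum_{k=0}^{p-1}a_kx^{pk}\mapsto a_i$ ($a_k\in K[x^{p^2}]$), using $K[x^p]=\bigoplus_{k=0}^{p-1}K[x^{p^2}]x^{pk}$ (in the paper it is expressed as $\partial^{[pi]}\prod_{j\ne i}(x^p\partial^{[p]}-j)/\prod_{j\neq i}(i-j)$ with divided-power derivations $\partial^{[m]}=\frac{d^m}{dx^m}/m!$). $\Delta:=\partial^{[(p-1)p]}F^{-1}:K[x^{p^2}]\to K[x^{p^2}]$ is the $\mathbb{F}_p$-linear map $\sum_{i\ge0}a_ix^{p^2i}\mapsto\sum_{i\ge0}a_{p-1+pi}^{1/p}x^{p^2i}$ ($a_i\in K$), where $\partial^{[m]}(x^k)=\binom{k}{m}x^{k-m}$; $\Delta$ is locally nilpotent, so the sums over $j$ are finite. *)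

theory Defs
  imports "HOL-Computational_Algebra.Polynomial"
begin

text \<open>Polynomials lying in K[x^m]: only exponents divisible by m occur.\<close>
definition in_pow_ring :: "nat \<Rightarrow> 'a::zero poly \<Rightarrow> bool" where
  "in_pow_ring m f \<longleftrightarrow> (\<forall>n. coeff f n \<noteq> 0 \<longrightarrow> m dvd n)"

definition proot :: "nat \<Rightarrow> 'a::field \<Rightarrow> 'a" where
  "proot p c = (THE y. y ^ p = c)"

definition theta :: "nat \<Rightarrow> 'a::field poly \<Rightarrow> 'a poly" where
  "theta p f = f ^ p + (pderiv ^^ (p - 1)) f"

text \<open>Inverse Frobenius on K[x^p]: sum c_j x^(pj) maps to sum c_j^(1/p) x^j.\<close>
definition Finv :: "nat \<Rightarrow> 'a::field poly \<Rightarrow> 'a poly" where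
  "Finv p f = Poly (map (\<lambda>n. proot p (coeff f (p * n))) [0..<Suc (degree f)])"

text \<open>pi_i : K[x^p] -> K[x^(p^2)], sum_{k<p} a_k x^(pk) maps to a_i.\<close>
definition piP :: "nat \<Rightarrow> nat \<Rightarrow> 'a::field poly \<Rightarrow> 'a poly" where
  "piP p i f = Poly (map (\<lambda>n. if p ^ 2 dvd n then coeff f (n + p * i) else 0)
                        [0..<Suc (degree f)])"

text \<open>Delta : sum a_i x^(p^2 i) maps to sum a_(p-1+pi)^(1/p) x^(p^2 i).\<close>
definition Delta :: "nat \<Rightarrow> 'a::field poly \<Rightarrow> 'a poly" where
  "Delta p g = Poly (map (\<lambda>n. if p ^ 2 dvd n
                                then proot p (coeff g (p ^ 2 * (p - 1) + p * n)) else 0)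
                        [0..<Suc (degree g)])"

text \<open>sum_{j>=0} Delta^j(g); Delta lowers the degree of nonconstant polynomials and
  kills constants, so all terms with j > degree g vanish.\<close>
definition Dsum :: "nat \<Rightarrow> 'a::field poly \<Rightarrow> 'a poly" where
  "Dsum p g = (\<Sum>j\<le>degree g. (Delta p ^^ j) g)"

definition Dsum1 :: "nat \<Rightarrow> 'a::field poly \<Rightarrow> 'a poly" where
  "Dsum1 p g = (\<Sum>j\<in>{1..degree g}. (Delta p ^^ j) g)"

end

theory Submission
  imports Defs "HOL-Number_Theory.Residues"
begin

text \<open>The \<open>\<lambda>\<^sub>i \<in> K[x\<^sup>p]\<close> are constants for \<open>d/dx\<close>, so \<open>d\<^sup>p\<^sup>-\<^sup>1/dx\<^sup>p\<^sup>-\<^sup>1\<close> kills all summands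
  \<open>\<lambda>\<^sub>i x\<^sup>i\<close> except the last, which by Wilson's theorem becomes \<open>(p - 1)! \<lambda>\<^sub>p\<^sub>-\<^sub>1 = -\<lambda>\<^sub>p\<^sub>-\<^sub>1\<close>;
  together with the Frobenius this gives \<open>\<theta>(f) = \<Sum> \<lambda>\<^sub>i\<^sup>p x\<^sup>p\<^sup>i - \<lambda>\<^sub>p\<^sub>-\<^sub>1\<close>. Comparing components in
  \<open>K[x\<^sup>p] = \<Oplus>\<^sub>i<p K[x^(p^2)] x\<^sup>p\<^sup>i\<close> yields \<open>\<lambda>\<^sub>i = F\<^sup>-\<^sup>1(\<mu>\<^sub>i + \<pi>\<^sub>i \<lambda>\<^sub>p\<^sub>-\<^sub>1)\<close>. For \<open>i = p - 1\<close>, and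
  because \<open>\<Delta> = \<pi>\<^sub>p\<^sub>-\<^sub>1 F\<^sup>-\<^sup>1\<close>, this says that \<open>C = \<pi>\<^sub>p\<^sub>-\<^sub>1 \<lambda>\<^sub>p\<^sub>-\<^sub>1\<close> solves \<open>C = \<Delta>(\<mu>\<^sub>p\<^sub>-\<^sub>1 + C)\<close>.
  As \<open>\<Delta>\<close> is additive and nilpotent, the unique solution is \<open>C = \<Sum>\<^sub>j\<^sub>\<ge>\<^sub>1 \<Delta>\<^sup>j \<mu>\<^sub>p\<^sub>-\<^sub>1\<close>; hence
  \<open>\<lambda>\<^sub>p\<^sub>-\<^sub>1 = F\<^sup>-\<^sup>1 \<Sum>\<^sub>j\<^sub>\<ge>\<^sub>0 \<Delta>\<^sup>j \<mu>\<^sub>p\<^sub>-\<^sub>1\<close>, and both formulas follow.\<close>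

hide_const (open) UnivPoly.coeff UnivPoly.monom

lemma coeff_Poly_map_upt:
  "coeff (Poly (map h [0..<Suc d])) n = (if n \<le> d then h n else 0)"
  by (simp add: nth_default_def del: upt_Suc)

lemma in_pow_ringD: "in_pow_ring m f \<Longrightarrow> \<not> m dvd n \<Longrightarrow> coeff f n = 0"
  unfolding in_pow_ring_def by blast

lemma coeff_mult_monom_1:
  "coeff (a * monom 1 m) n = (if m \<le> n then coeff a (n - m) else 0)"
  for a :: "'a::comm_semiring_1 poly"
  by (simp add: mult.commute[of a] coeff_monom_mult)

lemma coeff_piP:
  "coeff (piP p i f) n = (if p ^ 2 dvd n then coeff f (n + p * i) else 0)"
  unfolding piP_def coeff_Poly_map_upt by (auto simp: coeff_eq_0)

lemma in_pow_ring_piP: "in_pow_ring (p ^ 2) (piP p i f)"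
  unfolding in_pow_ring_def by (simp add: coeff_piP)

lemma piP_diff: "piP p i (a - b) = piP p i a - piP p i b"
  by (rule poly_eqI) (simp add: coeff_piP)

lemma mod_power2_eq_mult_iff:
  fixes p i n :: nat
  assumes "i < p"
  shows "n mod p ^ 2 = p * i \<longleftrightarrow> p * i \<le> n \<and> p ^ 2 dvd n - p * i"
proof
  assume "n mod p ^ 2 = p * i"
  moreover have "n = p ^ 2 * (n div p ^ 2) + n mod p ^ 2" by simp
  ultimately show "p * i \<le> n \<and> p ^ 2 dvd n - p * i"
    by (metis add_diff_cancel_right' dvd_triv_left le_add2)
next
  assume "p * i \<le> n \<and> p ^ 2 dvd n - p * i"
  then have "n = (n - p * i) + p * i" and "(n - p * i) mod p ^ 2 = 0" by auto
  moreover have "p * i < p ^ 2" using assms by (simp add: power2_eq_square)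
  ultimately show "n mod p ^ 2 = p * i" by (metis mod_add_left_eq add_0 mod_less)
qed

lemma coeff_mult_monom_in_pow_ring:
  fixes a :: "'a::comm_semiring_1 poly"
  assumes "in_pow_ring (p ^ 2) a" "i < p"
  shows "coeff (a * monom 1 (p * i)) n = (if n mod p ^ 2 = p * i then coeff a (n - p * i) else 0)"
  using in_pow_ringD[OF assms(1), of "n - p * i"]
  by (auto simp: coeff_mult_monom_1 mod_power2_eq_mult_iff[OF assms(2)])

lemma piP_sum_monom:
  assumes "\<forall>i<p. in_pow_ring (p ^ 2) (a i)" "k < p"
  shows "piP p k (\<Sum>i<p. a i * monom 1 (p * i)) = a k"
proof (rule poly_eqI)
  fix n
  show "coeff (piP p k (\<Sum>i<p. a i * monom 1 (p * i))) n = coeff (a k) n"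
  proof (cases "p ^ 2 dvd n")
    case True
    then have "(n + p * k) mod p ^ 2 = p * k"
      using mod_power2_eq_mult_iff[OF assms(2)] by simp
    then have "coeff (\<Sum>i<p. a i * monom 1 (p * i)) (n + p * k)
        = (\<Sum>i<p. if i = k then coeff (a i) n else 0)"
      unfolding coeff_sum using assms by (intro sum.cong) (auto simp: coeff_mult_monom_in_pow_ring)
    then show ?thesis using True assms(2) by (simp add: coeff_piP)
  next
    case False
    then show ?thesis using assms in_pow_ringD[of "p ^ 2" "a k" n] by (simp add: coeff_piP)
  qed
qed

lemma sum_piP_monom:
  assumes "in_pow_ring p h" "p > 0"
  shows "(\<Sum>i<p. piP p i h * monom 1 (p * i)) = h"
proof (rule poly_eqI)
  fix n
  have "coeff (\<Sum>i<p. piP p i h * monom 1 (p * i)) n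
      = (\<Sum>i<p. if n mod p ^ 2 = p * i then coeff h n else 0)"
    unfolding coeff_sum
    by (intro sum.cong) (auto simp: coeff_mult_monom_in_pow_ring in_pow_ring_piP coeff_piP
                                    mod_power2_eq_mult_iff)
  also have "\<dots> = coeff h n"
  proof (cases "p dvd n")
    case True
    define i where "i = n mod p ^ 2 div p"
    have "p dvd n mod p ^ 2" using True by (simp add: dvd_mod power2_eq_square)
    then have i: "n mod p ^ 2 = p * i" by (simp add: i_def)
    moreover have "i < p"
      using assms(2) by (simp add: i_def div_less_iff_less_mult power2_eq_square mult.commute)
    ultimately have "(\<Sum>j<p. if n mod p ^ 2 = p * j then coeff h n else 0)
        = (\<Sum>j<p. if j = i then coeff h n else 0)"
      using assms(2) by (intro sum.cong) auto
    then show ?thesis using \<open>i < p\<close> by simp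
  next
    case False
    then have "coeff h n = 0" by (rule in_pow_ringD[OF assms(1)])
    then show ?thesis by (simp only:) (intro sum.neutral, simp)
  qed
  finally show "coeff (\<Sum>i<p. piP p i h * monom 1 (p * i)) n = coeff h n" .
qed

lemma Dsum_eq_add_Dsum1: "Dsum p m = m + Dsum1 p m"
proof -
  have "Dsum p m = (\<Sum>j\<in>{0..degree m}. (Delta p ^^ j) m)"
    unfolding Dsum_def atMost_atLeast0 ..
  also have "\<dots> = (Delta p ^^ 0) m + (\<Sum>j\<in>{Suc 0..degree m}. (Delta p ^^ j) m)"
    by (rule sum.atLeast_Suc_atMost) simp
  finally show ?thesis unfolding Dsum1_def by simp
qed

lemma higher_pderiv_mult_const:
  fixes a b :: "'a::field poly"
  assumes "pderiv a = 0"
  shows "(pderiv ^^ k) (a * b) = a * (pderiv ^^ k) b"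
proof (induction k arbitrary: b)
  case (Suc k)
  have "(pderiv ^^ Suc k) (a * b) = (pderiv ^^ k) (a * pderiv b)"
    by (simp add: funpow_Suc_right pderiv_mult assms del: funpow.simps)
  also have "\<dots> = a * (pderiv ^^ Suc k) b"
    by (simp add: Suc.IH funpow_Suc_right del: funpow.simps)
  finally show ?case .
qed simp

lemma higher_pderiv_monom_less:
  "i < k \<Longrightarrow> (pderiv ^^ k) (monom (1::'a::field) i) = 0"
  by (rule poly_eqI) (simp add: coeff_higher_pderiv coeff_monom)

lemma higher_pderiv_monom_self:
  "(pderiv ^^ k) (monom (1::'a::field) k) = [:of_nat (fact k):]"
proof -
  have "pochhammer (1::'a) k = of_nat (fact k)"
    using pochhammer_of_nat[of 1 k] by (simp add: pochhammer_fact)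
  then show ?thesis
    by (intro poly_eqI) (simp add: coeff_higher_pderiv coeff_monom coeff_pCons split: nat.splits)
qed

locale char_p =
  fixes p :: nat and K :: "'a::field itself"
  assumes CHAR_eq: "CHAR('a) = p" and p_pos: "p > 0"
begin

lemma prime_p: "prime p"
  using prime_CHAR_semidom[where 'a='a] CHAR_eq p_pos by simp

lemma power_sum_char:
  "sum f A ^ p = (\<Sum>i\<in>A. f i ^ p)" for f :: "'b \<Rightarrow> 'a poly"
  by (rule freshmans_dream_sum) (simp_all add: CHAR_eq prime_p)

lemma power_char_inj:
  assumes "x ^ p = y ^ p"
  shows "x = (y::'a)"
proof -
  have "((x - y) + y) ^ p = (x - y) ^ p + y ^ p"
    by (rule freshmans_dream) (simp_all add: CHAR_eq prime_p)
  then show ?thesis using assms p_pos by simp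
qed

lemma proot_power [simp]: "proot p (c ^ p) = (c::'a)"
  unfolding proot_def by (rule the_equality) (auto intro: power_char_inj)

lemma proot_0 [simp]: "proot p (0::'a) = 0"
  using proot_power[of 0] p_pos by (simp add: power_0_left)

lemma fact_CHAR_minus_1: "(of_nat (fact (p - 1)) :: 'a) = -1"
proof -
  have "int p dvd fact (p - 1) + 1"
    using wilson_theorem[OF prime_p] by (simp add: cong_iff_dvd_diff)
  then have "(of_int (fact (p - 1) + 1) :: 'a) = 0"
    by (simp only: of_int_eq_0_iff_char_dvd CHAR_eq)
  moreover have "(of_int (fact (p - 1)) :: 'a) = of_nat (fact (p - 1))"
    by (metis of_int_of_nat_eq of_nat_fact)
  ultimately show ?thesis by (simp add: eq_neg_iff_add_eq_0)
qed

lemma coeff_Finv: "coeff (Finv p f) n = proot p (coeff f (p * n))" for f :: "'a poly"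
proof (cases "n \<le> degree f")
  case False
  moreover have "n \<le> p * n" using p_pos by simp
  ultimately have "coeff f (p * n) = 0" by (intro coeff_eq_0) linarith
  with False show ?thesis unfolding Finv_def coeff_Poly_map_upt by simp
qed (unfold Finv_def coeff_Poly_map_upt, simp)

lemma coeff_Delta:
  "coeff (Delta p g) n = (if p ^ 2 dvd n then proot p (coeff g (p ^ 2 * (p - 1) + p * n)) else 0)"
  for g :: "'a poly"
proof (cases "n \<le> degree g")
  case False
  moreover have "n \<le> p * n" using p_pos by simp
  ultimately have "coeff g (p ^ 2 * (p - 1) + p * n) = 0" by (intro coeff_eq_0) linarith
  with False show ?thesis unfolding Delta_def coeff_Poly_map_upt by simp
qed (unfold Delta_def coeff_Poly_map_upt, simp)

lemma Delta_eq_piP_Finv: "Delta p h = piP p (p - 1) (Finv p h)" for h :: "'a poly"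
  by (rule poly_eqI) (simp add: coeff_Delta coeff_piP coeff_Finv algebra_simps power2_eq_square)

lemma Delta_0 [simp]: "Delta p (0::'a poly) = 0"
  by (rule poly_eqI) (simp add: coeff_Delta)

lemma degree_Delta_less:
  fixes h :: "'a poly"
  assumes "Delta p h \<noteq> 0"
  shows "degree (Delta p h) < degree h"
proof -
  let ?n = "degree (Delta p h)"
  have "coeff h (p ^ 2 * (p - 1) + p * ?n) \<noteq> 0"
    using assms leading_coeff_neq_0[OF assms] by (auto simp: coeff_Delta split: if_splits)
  then have "p ^ 2 * (p - 1) + p * ?n \<le> degree h" by (rule le_degree)
  moreover have "p ^ 2 * (p - 1) \<ge> 1" "p * ?n \<ge> ?n"
    using prime_ge_2_nat[OF prime_p] by simp_all
  ultimately show ?thesis by linarith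
qed

lemma Delta_funpow_eq_0: "degree h < k \<Longrightarrow> (Delta p ^^ k) h = 0" for h :: "'a poly"
proof (induction k arbitrary: h)
  case (Suc k)
  have "(Delta p ^^ k) (Delta p h) = 0"
  proof (cases "Delta p h = 0")
    case True
    show ?thesis unfolding True by (induction k) simp_all
  next
    case False
    then show ?thesis using Suc degree_Delta_less by (intro Suc.IH) fastforce
  qed
  then show ?case by (simp add: funpow_Suc_right del: funpow.simps)
qed simp

lemma coeff_power_char:
  "coeff (a ^ p) n = (if p dvd n then coeff a (n div p) ^ p else 0)" for a :: "'a poly"
proof -
  have "a ^ p = (\<Sum>k\<le>degree a. monom (coeff a k ^ p) (k * p))"
    by (subst (1) poly_as_sum_of_monoms[symmetric]) (simp add: power_sum_char monom_power)
  then have "coeff (a ^ p) n = (\<Sum>k\<le>degree a. if k * p = n then coeff a k ^ p else 0)"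
    by (simp add: coeff_sum coeff_monom)
  also have "\<dots> = (\<Sum>k\<le>degree a. if k = n div p \<and> p dvd n then coeff a k ^ p else 0)"
    using p_pos by (intro sum.cong) auto
  also have "\<dots> = (if p dvd n then coeff a (n div p) ^ p else 0)"
    using p_pos coeff_eq_0[of a "n div p"] by (auto simp: power_0_left)
  finally show ?thesis .
qed

lemma Finv_power [simp]: "Finv p (a ^ p) = a" for a :: "'a poly"
  by (rule poly_eqI) (simp add: coeff_Finv coeff_power_char p_pos)

lemma in_pow_ring_power:
  fixes a :: "'a poly"
  assumes "in_pow_ring p a"
  shows "in_pow_ring (p ^ 2) (a ^ p)"
  unfolding in_pow_ring_def
proof (intro allI impI)
  fix n assume "coeff (a ^ p) n \<noteq> 0"
  then have "p dvd n" and "coeff a (n div p) \<noteq> 0"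
    using p_pos by (auto simp: coeff_power_char split: if_splits)
  with assms have "p dvd n div p" unfolding in_pow_ring_def by blast
  with \<open>p dvd n\<close> show "p ^ 2 dvd n"
    by (metis dvd_mult_div_cancel mult_dvd_mono dvd_refl power2_eq_square)
qed

lemma pderiv_eq_0_if_in_pow_ring:
  fixes a :: "'a poly"
  assumes "in_pow_ring p a"
  shows "pderiv a = 0"
proof (rule poly_eqI)
  fix n
  have "of_nat (Suc n) * coeff a (Suc n) = 0"
  proof (cases "p dvd Suc n")
    case True
    then have "(of_nat (Suc n) :: 'a) = 0" by (simp only: of_nat_eq_0_iff_char_dvd CHAR_eq)
    then show ?thesis by simp
  qed (simp add: in_pow_ringD[OF assms])
  then show "coeff (pderiv a) n = coeff 0 n" by (simp add: coeff_pderiv)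
qed

lemma theta_sum_monom:
  fixes lam :: "nat \<Rightarrow> 'a poly"
  assumes "\<forall>i<p. in_pow_ring p (lam i)"
  shows "theta p (\<Sum>i<p. lam i * monom 1 i) = (\<Sum>i<p. lam i ^ p * monom 1 (p * i)) - lam (p - 1)"
proof -
  have "(lam i * monom 1 i) ^ p = lam i ^ p * monom 1 (p * i)" for i
    by (simp add: power_mult_distrib monom_power mult.commute)
  then have power: "(\<Sum>i<p. lam i * monom 1 i) ^ p = (\<Sum>i<p. lam i ^ p * monom 1 (p * i))"
    by (simp add: power_sum_char)
  have "(pderiv ^^ (p - 1)) (\<Sum>i<p. lam i * monom 1 i)
      = (\<Sum>i<p. if i = p - 1 then lam (p - 1) * [:of_nat (fact (p - 1)):] else 0)"
    unfolding higher_pderiv_sum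
  proof (intro sum.cong)
    fix i assume "i \<in> {..<p}"
    then show "(pderiv ^^ (p - 1)) (lam i * monom 1 i)
        = (if i = p - 1 then lam (p - 1) * [:of_nat (fact (p - 1)):] else 0)"
      using assms by (auto simp: higher_pderiv_mult_const pderiv_eq_0_if_in_pow_ring
                                 higher_pderiv_monom_less higher_pderiv_monom_self)
  qed simp
  also have "\<dots> = - lam (p - 1)"
    using p_pos unfolding fact_CHAR_minus_1 by simp
  finally show ?thesis by (simp add: theta_def power)
qed

end

locale perfect_char_p = char_p p K for p and K :: "'a::field itself" +
  assumes perfect: "surj (\<lambda>x::'a. x ^ p)"
begin

lemma power_proot [simp]: "proot p c ^ p = (c::'a)"
  using perfect by (metis proot_power surjD)

lemma proot_add: "proot p (a + b) = proot p a + proot p (b::'a)"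
proof -
  have "(proot p a + proot p b) ^ p = a + b"
    by (subst freshmans_dream) (simp_all add: CHAR_eq prime_p)
  then show ?thesis by (metis proot_power)
qed

lemma Finv_add: "Finv p (a + b) = Finv p a + Finv p b" for a b :: "'a poly"
  by (rule poly_eqI) (simp add: coeff_Finv proot_add)

lemma Delta_add: "Delta p (a + b) = Delta p a + Delta p b" for a b :: "'a poly"
  by (rule poly_eqI) (simp add: coeff_Delta proot_add)

lemma Delta_diff: "Delta p (a - b) = Delta p a - Delta p b" for a b :: "'a poly"
  using Delta_add[of "a - b" b] by (simp add: algebra_simps)

lemma Delta_sum: "Delta p (sum f A) = (\<Sum>x\<in>A. Delta p (f x))" for f :: "'b \<Rightarrow> 'a poly"
  by (induction A rule: infinite_finite_induct) (simp_all add: Delta_add)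

lemma Dsum1_eq_Delta: "Dsum1 p m = Delta p (m + Dsum1 p m)" for m :: "'a poly"
proof -
  define d where "d = degree m"
  have "Delta p (m + Dsum1 p m) = (Delta p ^^ 1) m + (\<Sum>j\<in>{1..d}. (Delta p ^^ Suc j) m)"
    unfolding Delta_add Dsum1_def Delta_sum d_def by simp
  also have "(\<Sum>j\<in>{1..d}. (Delta p ^^ Suc j) m) = (\<Sum>j\<in>{Suc 1..Suc d}. (Delta p ^^ j) m)"
    by (rule sum.shift_bounds_cl_Suc_ivl[symmetric])
  also have "(Delta p ^^ 1) m + \<dots> = (\<Sum>j\<in>{1..Suc d}. (Delta p ^^ j) m)"
    by (rule sum.atLeast_Suc_atMost[symmetric]) simp
  also have "\<dots> = Dsum1 p m + (Delta p ^^ Suc d) m"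
    unfolding Dsum1_def d_def by simp
  also have "(Delta p ^^ Suc d) m = 0"
    by (rule Delta_funpow_eq_0) (simp add: d_def)
  finally show ?thesis by simp
qed

lemma eq_Dsum1_if_fixpoint:
  fixes h m :: "'a poly"
  assumes "h = Delta p (m + h)"
  shows "h = Dsum1 p m"
proof -
  define e where "e = h - Dsum1 p m"
  have "Delta p e = e"
    using assms Dsum1_eq_Delta[of m] unfolding e_def
    by (metis Delta_diff add_diff_cancel_left)
  then have "(Delta p ^^ k) e = e" for k
    by (induction k) simp_all
  moreover have "(Delta p ^^ Suc (degree e)) e = 0"
    by (rule Delta_funpow_eq_0) simp
  ultimately show ?thesis unfolding e_def by (metis eq_iff_diff_eq_0)
qed

context
  fixes f :: "'a poly" and mu lam :: "nat \<Rightarrow> 'a poly"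
  assumes mu_xp2: "\<forall>i<p. in_pow_ring (p ^ 2) (mu i)"
    and theta_f: "theta p f = (\<Sum>i<p. mu i * monom 1 (p * i))"
    and lam_xp: "\<forall>i<p. in_pow_ring p (lam i)"
    and f_decomp: "f = (\<Sum>i<p. lam i * monom 1 i)"
begin

lemma theta_inverse_component:
  assumes "k < p"
  shows "lam k = Finv p (mu k + piP p k (lam (p - 1)))"
proof -
  have "mu k = piP p k (theta p f)"
    unfolding theta_f using mu_xp2 assms by (rule piP_sum_monom[symmetric])
  also have "\<dots> = lam k ^ p - piP p k (lam (p - 1))"
    using piP_sum_monom[of p "\<lambda>i. lam i ^ p"] lam_xp assms
    by (simp add: f_decomp theta_sum_monom piP_diff in_pow_ring_power)
  finally have "lam k ^ p = mu k + piP p k (lam (p - 1))" by simp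
  then show ?thesis by (metis Finv_power)
qed

lemma piP_last_theta_inverse: "piP p (p - 1) (lam (p - 1)) = Dsum1 p (mu (p - 1))"
proof (rule eq_Dsum1_if_fixpoint)
  show "piP p (p - 1) (lam (p - 1)) = Delta p (mu (p - 1) + piP p (p - 1) (lam (p - 1)))"
    using theta_inverse_component[of "p - 1"] p_pos by (simp add: Delta_eq_piP_Finv)
qed

lemma last_theta_inverse: "lam (p - 1) = Finv p (Dsum p (mu (p - 1)))"
  using theta_inverse_component[of "p - 1"] p_pos
  unfolding piP_last_theta_inverse Dsum_eq_add_Dsum1 by simp

end

end

theorem proposition2p2:
  fixes p :: nat and g f :: "'a::field poly" and mu lam :: "nat \<Rightarrow> 'a poly"
  assumes char: "CHAR('a) = p" and ppos: "p > 0"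
    and perfect: "surj (\<lambda>x::'a. x ^ p)"
    and g_xp: "in_pow_ring p g"
    and mu_xp2: "\<forall>i<p. in_pow_ring (p ^ 2) (mu i)"
    and g_decomp: "g = (\<Sum>i<p. mu i * monom 1 (p * i))"
    and f_inv: "theta p f = g"
    and lam_xp: "\<forall>i<p. in_pow_ring p (lam i)"
    and f_decomp: "f = (\<Sum>i<p. lam i * monom 1 i)"
  shows "(\<forall>i \<le> p - 2. lam i = Finv p (mu i) + Finv p (piP p i (Finv p (Dsum p (mu (p - 1))))))
       \<and> lam (p - 1) = (\<Sum>i\<le>p - 2. monom 1 (p * i) * piP p i (Finv p (Dsum p (mu (p - 1)))))
                       + monom 1 (p * (p - 1)) * Dsum1 p (mu (p - 1))"
proof -
  interpret perfect_char_p p "TYPE('a)"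
    by standard (fact char ppos perfect)+
  have theta_f: "theta p f = (\<Sum>i<p. mu i * monom 1 (p * i))"
    using f_inv g_decomp by simp
  note component = theta_inverse_component[OF mu_xp2 theta_f lam_xp f_decomp]
  define D where "D = Finv p (Dsum p (mu (p - 1)))"
  have last: "lam (p - 1) = D"
    unfolding D_def by (rule last_theta_inverse[OF mu_xp2 theta_f lam_xp f_decomp])
  have p2: "p \<ge> 2" using prime_ge_2_nat[OF prime_p] .
  have "lam i = Finv p (mu i) + Finv p (piP p i D)" if "i \<le> p - 2" for i
    using component[of i] that p2 unfolding last by (simp add: Finv_add)
  moreover have "in_pow_ring p D"
    using lam_xp p_pos unfolding last[symmetric] by simp
  then have "lam (p - 1) = (\<Sum>i<p. piP p i D * monom 1 (p * i))"
    unfolding last by (simp add: sum_piP_monom p_pos)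
  moreover have "{..<p} = insert (p - 1) {..p - 2}" using p2 by auto
  moreover have "piP p (p - 1) D = Dsum1 p (mu (p - 1))"
    using piP_last_theta_inverse[OF mu_xp2 theta_f lam_xp f_decomp] unfolding last .
  ultimately show ?thesis
    unfolding D_def using p2 by (simp add: mult.commute)
qed

end
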